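(* There do not exist a mapping $\hat c$ from the set of $3$-element multisets of elements of $[3]=\{1,2,3\}$ to $[3]$ and a function $m'$ from positive integers to positive integers such that the following holds for every positive integer $m$: for every hypergraph $G=(V,E)$ and every $3$-coloring $c:\binom{V}{2}\to[3]$ of the pairs of vertices of $G$ such that every hyperedge containing at least $m$ vertices contains pairs of all three colors, the coloring $c':\binom{V}{3}\to[3]$ defined by $c'(\{x,y,z\})=\hat c(\{c(\{x,y\}),c(\{x,z\}),c(\{y,z\})\})$ (multiset) has the property that every hyperedge containing at least $m'(m)$ vertices contains triples of all three colors.
   Context: $\binom{V}{j}$ denotes the set of $j$-element subsets of $V$. A hyperedge contains a pair/triple if it is a subset of the hyperedge. *)

theory Defs
  imports Main "HOL-Library.Multiset"
begin

definition colours3 :: "nat set" where "colours3 = {1, 2, 3}"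

definition tri_col :: "(nat multiset \<Rightarrow> nat) \<Rightarrow> (nat set \<Rightarrow> nat) \<Rightarrow> nat set \<Rightarrow> nat" where
  "tri_col chat c T = chat (image_mset c (mset_set {p. p \<subseteq> T \<and> card p = 2}))"

definition all_colours :: "(nat set \<Rightarrow> nat) \<Rightarrow> nat \<Rightarrow> nat set \<Rightarrow> bool" where
  "all_colours f k e = (\<forall>col\<in>colours3. \<exists>S. S \<subseteq> e \<and> card S = k \<and> f S = col)"

end

theory Submission
  imports Defs
begin

text \<open>
  Give the pair \<open>{0,1}\<close> colour \<open>B\<close>, the other pairs through \<open>0\<close> colour \<open>C\<close>, the other
  pairs through \<open>1\<close> colour \<open>D\<close>, and all remaining pairs colour \<open>A\<close>. Every triple then
  carries one of the pair-colour multisets \<open>{A,A,A}\<close>, \<open>{C,C,A}\<close>, \<open>{D,D,A}\<close>, \<open>{B,C,D}\<close>;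
  so, on a single large hyperedge, \<open>{A,B,C,D} = [3]\<close> forces \<open>chat\<close> to map these four
  multisets onto \<open>[3]\<close>. Already for \<open>m = 1\<close>, the choices \<open>(A,B,C,D) = (1,2,3,1), (1,2,3,3)\<close>
  and \<open>(2,1,3,2)\<close> make \<open>chat\<close> injective on \<open>{1,1,1}, {1,3,3}, {1,2,3}\<close>, equal on \<open>{1,2,3}\<close>
  and \<open>{2,3,3}\<close>, and onto \<open>[3]\<close> on \<open>{2,2,2}, {2,3,3}, {1,2,3}\<close>, which is impossible.
\<close>

definition two_apex_colouring :: "nat \<Rightarrow> nat \<Rightarrow> nat \<Rightarrow> nat \<Rightarrow> nat set \<Rightarrow> nat" where
  "two_apex_colouring A B C D p =
     (if p = {0, 1} then B else if 0 \<in> p then C else if 1 \<in> p then D else A)"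

lemma card_3_sorted:
  fixes S :: "'a::linorder set"
  assumes "card S = 3"
  obtains x y z where "x < y" "y < z" "S = {x, y, z}"
proof -
  obtain a b c where "S = {a, b, c}" "a \<noteq> b" "a \<noteq> c" "b \<noteq> c"
    using assms card_3_iff by metis
  then show ?thesis
    using that
    by (cases a b rule: linorder_cases; cases a c rule: linorder_cases;
        cases b c rule: linorder_cases) (auto simp: insert_commute)
qed

lemma pairs_of_three:
  assumes "x \<noteq> y" "x \<noteq> z" "y \<noteq> z"
  shows "{p. p \<subseteq> {x, y, z} \<and> card p = 2} = {{x, y}, {x, z}, {y, z}}"
  using assms by (auto simp: card_2_iff)

lemma tri_col_insert3:
  assumes "x \<noteq> y" "x \<noteq> z" "y \<noteq> z"
  shows "tri_col chat c {x, y, z} = chat {#c {x, y}, c {x, z}, c {y, z}#}"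
proof -
  have "{x, y} \<noteq> {x, z}" "{x, y} \<noteq> {y, z}" "{x, z} \<noteq> {y, z}"
    using assms by (auto simp: doubleton_eq_iff)
  then show ?thesis
    unfolding tri_col_def pairs_of_three[OF assms] by (simp add: add_mset_commute)
qed

lemma tri_col_two_apex_colouring:
  assumes "card S = 3"
  shows "tri_col chat (two_apex_colouring A B C D) S
           \<in> {chat {#A, A, A#}, chat {#C, C, A#}, chat {#D, D, A#}, chat {#B, C, D#}}"
proof -
  obtain x y z where xyz: "x < y" "y < z" "S = {x, y, z}"
    using card_3_sorted[OF assms] .
  let ?c = "two_apex_colouring A B C D"
  have S: "tri_col chat ?c S = chat {#?c {x, y}, ?c {x, z}, ?c {y, z}#}"
    using xyz tri_col_insert3[of x y z] by simp
  consider "x = 0" "y = 1" | "x = 0" "y \<ge> 2" | "x = 1" | "x \<ge> 2"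
    using xyz by linarith
  then show ?thesis
    unfolding S by cases (use xyz in \<open>auto simp: two_apex_colouring_def doubleton_eq_iff\<close>)
qed

lemma all_colours_two_apex_colouring:
  assumes "colours3 \<subseteq> {A, B, C, D}" and "{0, 1, 2, 3} \<subseteq> e"
  shows "all_colours (two_apex_colouring A B C D) 2 e"
  unfolding all_colours_def
proof
  let ?P = "{{2, 3}, {0, 1}, {0, 2}, {1, 2}} :: nat set set"
  have image: "two_apex_colouring A B C D ` ?P = {A, B, C, D}"
    by (simp add: two_apex_colouring_def doubleton_eq_iff) blast
  fix k assume "k \<in> colours3"
  then obtain S where "S \<in> ?P" "two_apex_colouring A B C D S = k"
    using assms(1) unfolding image[symmetric] by blast
  moreover have "S \<subseteq> e \<and> card S = 2" if "S \<in> ?P" for S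
    using that assms(2) by auto
  ultimately show "\<exists>S. S \<subseteq> e \<and> card S = 2 \<and> two_apex_colouring A B C D S = k"
    by blast
qed

lemma colours3_subset_two_apex_values:
  assumes transfer: "\<forall>(V :: nat set) (E :: nat set set) (c :: nat set \<Rightarrow> nat).
          finite V \<and> E \<subseteq> Pow V \<and>
          (\<forall>p. p \<subseteq> V \<and> card p = 2 \<longrightarrow> c p \<in> colours3) \<and>
          (\<forall>e\<in>E. m \<le> card e \<longrightarrow> all_colours c 2 e)
          \<longrightarrow> (\<forall>e\<in>E. k \<le> card e \<longrightarrow> all_colours (tri_col chat c) 3 e)"
    and colours: "{A, B, C, D} = colours3"
  shows "colours3 \<subseteq> {chat {#A, A, A#}, chat {#C, C, A#}, chat {#D, D, A#}, chat {#B, C, D#}}"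
proof
  fix col assume col: "col \<in> colours3"
  define V where "V = {0..<m + k + 4}"
  let ?c = "two_apex_colouring A B C D"
  have "\<forall>p. p \<subseteq> V \<and> card p = 2 \<longrightarrow> ?c p \<in> colours3"
    using colours by (auto simp: two_apex_colouring_def)
  moreover have "all_colours ?c 2 V"
    using colours by (intro all_colours_two_apex_colouring) (auto simp: V_def)
  ultimately have "all_colours (tri_col chat ?c) 3 V"
    using transfer[rule_format, of V "{V}" ?c] by (auto simp: V_def)
  then obtain S where "card S = 3" "tri_col chat ?c S = col"
    using col unfolding all_colours_def by blast
  then show "col \<in> {chat {#A, A, A#}, chat {#C, C, A#}, chat {#D, D, A#}, chat {#B, C, D#}}"
    using tri_col_two_apex_colouring by metis
qed

lemma no_three_covers:
  assumes "card X = 3" "X \<subseteq> {a, b, p}" "X \<subseteq> {a, b, r}" "X \<subseteq> {s, r, p}"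
  shows False
proof -
  have "card {a, b, p} \<le> 3"
    by (simp add: card_insert_if)
  then have X: "X = {a, b, p}"
    using assms(1,2) by (simp add: card_seteq)
  then have "p \<noteq> a" "p \<noteq> b"
    using assms(1) by (auto simp: card_insert_if split: if_splits)
  then have "r = p"
    using assms(3) X by auto
  then have "card X \<le> card {s, p}"
    using assms(4) by (simp add: card_mono)
  also have "\<dots> \<le> 2"
    by (simp add: card_insert_if)
  finally show False
    using assms(1) by simp
qed

theorem proposition5:
  shows "\<not> (\<exists>(chat :: nat multiset \<Rightarrow> nat) (m' :: nat \<Rightarrow> nat).
      (\<forall>M. set_mset M \<subseteq> colours3 \<and> size M = 3 \<longrightarrow> chat M \<in> colours3) \<and>
      (\<forall>m \<ge> 1. m' m \<ge> 1) \<and>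
      (\<forall>m \<ge> 1. \<forall>(V :: nat set) (E :: nat set set) (c :: nat set \<Rightarrow> nat).
          finite V \<and> E \<subseteq> Pow V \<and>
          (\<forall>p. p \<subseteq> V \<and> card p = 2 \<longrightarrow> c p \<in> colours3) \<and>
          (\<forall>e\<in>E. m \<le> card e \<longrightarrow> all_colours c 2 e)
          \<longrightarrow> (\<forall>e\<in>E. m' m \<le> card e \<longrightarrow> all_colours (tri_col chat c) 3 e)))"
proof (rule notI, elim exE conjE, goal_cases)
  case (1 chat m')
  note cover = colours3_subset_two_apex_values[OF mp[OF spec[OF 1(3), of 1] order.refl]]
  have "card colours3 = 3"
    by (simp add: colours3_def)
  moreover have "colours3 \<subseteq> {chat {#1, 1, 1#}, chat {#1, 3, 3#}, chat {#1, 2, 3#}}"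
    using cover[of 1 2 3 1] by (auto simp: colours3_def add_mset_commute)
  moreover have "colours3 \<subseteq> {chat {#1, 1, 1#}, chat {#1, 3, 3#}, chat {#2, 3, 3#}}"
    using cover[of 1 2 3 3] by (auto simp: colours3_def add_mset_commute)
  moreover have "colours3 \<subseteq> {chat {#2, 2, 2#}, chat {#2, 3, 3#}, chat {#1, 2, 3#}}"
    using cover[of 2 1 3 2] by (auto simp: colours3_def add_mset_commute)
  ultimately show False
    by (rule no_three_covers)
qed

end
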